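(* There is a comeager set of $\alpha\in 2^{(2^{<\mathbb N})^{<\mathbb N}\times\mathbb N\times\mathbb N}$ such that for all $x,y\in(2^{\mathbb N})^{\mathbb N}$ with $x$ separated and $y$ injective and separated, the following hold (with $\gamma=\gamma_\alpha$): (i) for every finite partial function $\tau\colon N\to\{0,1\}$ there are infinitely many $(t,k)\in N$ such that the function $(s,d)\mapsto\gamma(y)(t,k)(s,d)$ extends $\tau$; (ii) for all finite partial functions $\tau_1,\tau_2\colon N\to\{0,1\}$ there are infinitely many $(s,d)\in N$ such that $(t,k)\mapsto\gamma(y)(t,k)(s,d)$ extends $\tau_1$ and $(t,k)\mapsto\gamma(x)(s,d)(t,k)$ extends $\tau_2$.
   Context: $\mathbb N=\{0,1,2,\dots\}$; $N=\mathbb N^{<\mathbb N}\times\mathbb N$, where $\mathbb N^{<\mathbb N}$ is the set of finite sequences of naturals. The space $2^{(2^{<\mathbb N})^{<\mathbb N}\times\mathbb N\times\mathbb N}$ has the product topology (the index set is countable and discrete). For $z\in 2^{\mathbb N}$ and $t=(t_1,\dots,t_l)\in\mathbb N^{<\mathbb N}$, $z\circ t=(z(t_1),\dots,z(t_l))\in 2^{<\mathbb N}$. Given $\alpha$, define $\gamma_\alpha\colon(2^{\mathbb N})^{\mathbb N}\to(2^N)^N$ by: for $x\in(2^{\mathbb N})^{\mathbb N}$, $s=(s_1,\dots,s_m)$, $t\in\mathbb N^{<\mathbb N}$, $d,k\in\mathbb N$: $\gamma_\alpha(x)(s,d)(t,k)=\alpha\big((x(s_1)\circ t,\dots,x(s_m)\circ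 t),k,d\big)$. A sequence $a\in(2^{\mathbb N})^{\mathbb N}$ is injective if $a(i)\ne a(j)$ for $i\ne j$, and separated if for all distinct $n,k\in\mathbb N$ there is $i$ with $a(i)(n)\ne a(i)(k)$. *)

theory Defs
  imports "HOL-Analysis.Analysis"
begin

definition nowhere_dense :: "'a::topological_space set \<Rightarrow> bool" where
  "nowhere_dense S \<longleftrightarrow> interior (closure S) = {}"

definition meager :: "'a::topological_space set \<Rightarrow> bool" where
  "meager S \<longleftrightarrow> (\<exists>F. countable F \<and> (\<forall>T\<in>F. nowhere_dense T) \<and> S \<subseteq> \<Union>F)"

definition comeager :: "'a::topological_space set \<Rightarrow> bool" where
  "comeager S \<longleftrightarrow> meager (- S)"

text \<open>N = finite sequences of naturals times naturals; 2^{<N} = bool lists.\<close>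
type_synonym NN = "nat list \<times> nat"

definition seqcomp :: "(nat \<Rightarrow> bool) \<Rightarrow> nat list \<Rightarrow> bool list" where
  "seqcomp z t = map z t"

definition gamma :: "(bool list list \<times> nat \<times> nat \<Rightarrow> bool) \<Rightarrow> (nat \<Rightarrow> nat \<Rightarrow> bool)
    \<Rightarrow> NN \<Rightarrow> NN \<Rightarrow> bool" where
  "gamma \<alpha> x sd tk = \<alpha> (map (\<lambda>si. seqcomp (x si) (fst tk)) (fst sd), snd tk, snd sd)"

definition injective_seq :: "(nat \<Rightarrow> nat \<Rightarrow> bool) \<Rightarrow> bool" where
  "injective_seq a \<longleftrightarrow> (\<forall>i j. i \<noteq> j \<longrightarrow> a i \<noteq> a j)"

definition separated :: "(nat \<Rightarrow> nat \<Rightarrow> bool) \<Rightarrow> bool" where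
  "separated a \<longleftrightarrow> (\<forall>n k. n \<noteq> k \<longrightarrow> (\<exists>i. a i n \<noteq> a i k))"

definition finite_partial :: "(NN \<rightharpoonup> bool) \<Rightarrow> bool" where
  "finite_partial \<tau> \<longleftrightarrow> finite (dom \<tau>)"

definition extends :: "(NN \<Rightarrow> bool) \<Rightarrow> (NN \<rightharpoonup> bool) \<Rightarrow> bool" where
  "extends f \<tau> \<longleftrightarrow> (\<forall>q\<in>dom \<tau>. \<tau> q = Some (f q))"

end

theory Submission
  imports Defs
begin

text \<open>For finite partial maps \<open>\<sigma>1, \<sigma>2\<close> from keys \<open>(w, j)\<close> to bits and every \<open>n\<close>, the set of
  \<open>\<alpha>\<close> that for some \<open>m \<ge> n\<close> agree with \<open>\<sigma>1\<close> on the slice \<open>(w, m, j)\<close> and with \<open>\<sigma>2\<close> on the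
  slice \<open>(w, j, m)\<close> is open and dense: a basic open set constrains only finitely many coordinates,
  so a fresh \<open>m\<close> can be chosen. There are countably many such sets, so their intersection is
  comeager. For \<open>\<alpha>\<close> in it and finite \<open>\<tau>\<close>, separation (resp. injectivity) of the sequences
  yields a finite list \<open>s\<close> of indices on which the finitely many relevant arguments of \<open>\<gamma>\<^sub>\<alpha>\<close> are
  already told apart; then \<open>\<tau>\<close> becomes a finite partial map on keys, and each of the unboundedly
  many \<open>m\<close> realizing it gives a witness \<open>(s, m)\<close>.\<close>

lemma nowhere_dense_compl_of_open_dense:
  fixes U :: "'a::topological_space set"
  assumes "open U" and dense: "\<And>W. open W \<Longrightarrow> W \<noteq> {} \<Longrightarrow> W \<inter> U \<noteq> {}"
  shows "nowhere_dense (- U)"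
proof -
  have "interior (- U) = {}"
    using dense[of "interior (- U)"] interior_subset by blast
  then show ?thesis
    using \<open>open U\<close> by (simp add: nowhere_dense_def closure_closed closed_def)
qed

lemma open_fun_contains_cylinder:
  fixes W :: "('a \<Rightarrow> 'b::topological_space) set"
  assumes "open W" "f \<in> W"
  obtains J where "finite J" "\<And>g. (\<And>j. j \<in> J \<Longrightarrow> g j = f j) \<Longrightarrow> g \<in> W"
proof -
  have "openin (product_topology (\<lambda>i. euclidean) UNIV) W"
    using assms(1) by (simp add: open_fun_def)
  then obtain X where X: "f \<in> Pi\<^sub>E UNIV X" "finite {i. X i \<noteq> UNIV}" "Pi\<^sub>E UNIV X \<subseteq> W"
    using product_topology_open_contains_basis[OF _ assms(2)] by force
  show thesis
  proof (rule that[OF X(2)])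
    fix g assume "\<And>j. j \<in> {i. X i \<noteq> UNIV} \<Longrightarrow> g j = f j"
    then have "g \<in> Pi\<^sub>E UNIV X"
      using X(1) by (force simp: PiE_UNIV_domain)
    then show "g \<in> W" using X(3) by blast
  qed
qed

lemma open_map_le_comp:
  fixes \<sigma> :: "'a \<rightharpoonup> 'b::discrete_topology"
  assumes "finite (dom \<sigma>)"
  shows "open {f. \<sigma> \<subseteq>\<^sub>m Some \<circ> f \<circ> \<kappa>}"
proof -
  have "{f. \<sigma> \<subseteq>\<^sub>m Some \<circ> f \<circ> \<kappa>} = {f. \<forall>i\<in>dom \<sigma>. f (\<kappa> i) \<in> {the (\<sigma> i)}}"
    by (force simp: map_le_def)
  then show ?thesis
    using product_topology_basis'[OF assms, where x=\<kappa> and U="\<lambda>i. {the (\<sigma> i)}"] by (simp add: open_discrete)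
qed

lemma finite_dom_in_range_map_of:
  assumes "finite (dom \<sigma>)"
  shows "\<sigma> \<in> range map_of"
proof -
  obtain ks where "set ks = dom \<sigma>"
    using finite_list[OF assms] by blast
  then have "map_of (map (\<lambda>k. (k, the (\<sigma> k))) ks) = \<sigma>"
    by (auto simp: map_of_map_restrict restrict_map_def fun_eq_iff)
  then show ?thesis by (metis rangeI)
qed

lemma countable_finite_dom_maps:
  "countable {\<sigma> :: 'a::countable \<rightharpoonup> 'b::countable. finite (dom \<sigma>)}"
  by (rule countable_subset[of _ "range map_of"]) (auto intro: finite_dom_in_range_map_of)

lemma infinite_if_fibre_unbounded:
  fixes P :: "('a \<times> nat) set"
  assumes "\<And>n. \<exists>m\<ge>n. (s, m) \<in> P"
  shows "infinite P"
proof
  assume "finite P"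
  then have "finite (snd ` P)" by simp
  moreover have "{m. (s, m) \<in> P} \<subseteq> snd ` P" by force
  ultimately have "finite {m. (s, m) \<in> P}" by (rule finite_subset[rotated])
  moreover have "infinite {m. (s, m) \<in> P}"
    using assms by (simp add: infinite_nat_iff_unbounded_le)
  ultimately show False by contradiction
qed

definition realized_beyond ::
    "('w \<times> nat \<rightharpoonup> 'b) \<Rightarrow> ('w \<times> nat \<rightharpoonup> 'b) \<Rightarrow> nat \<Rightarrow> ('w \<times> nat \<times> nat \<Rightarrow> 'b) set" where
  "realized_beyond \<sigma>1 \<sigma>2 n = {\<alpha>. \<exists>m\<ge>n.
     \<sigma>1 \<subseteq>\<^sub>m Some \<circ> \<alpha> \<circ> (\<lambda>(w, j). (w, m, j)) \<and> \<sigma>2 \<subseteq>\<^sub>m Some \<circ> \<alpha> \<circ> (\<lambda>(w, j). (w, j, m))}"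

lemma open_realized_beyond:
  fixes \<sigma>1 \<sigma>2 :: "'w \<times> nat \<rightharpoonup> 'b::discrete_topology"
  assumes "finite (dom \<sigma>1)" "finite (dom \<sigma>2)"
  shows "open (realized_beyond \<sigma>1 \<sigma>2 n)"
proof -
  have "realized_beyond \<sigma>1 \<sigma>2 n = (\<Union>m\<in>{n..}.
      {\<alpha>. \<sigma>1 \<subseteq>\<^sub>m Some \<circ> \<alpha> \<circ> (\<lambda>(w, j). (w, m, j))} \<inter> {\<alpha>. \<sigma>2 \<subseteq>\<^sub>m Some \<circ> \<alpha> \<circ> (\<lambda>(w, j). (w, j, m))})"
    by (auto simp: realized_beyond_def)
  then show ?thesis
    using assms by (auto intro!: open_map_le_comp)
qed

lemma realized_beyond_meets_cylinder:
  fixes \<sigma>1 \<sigma>2 :: "'w \<times> nat \<rightharpoonup> 'b"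
  assumes "finite J" "finite (dom \<sigma>1)" "finite (dom \<sigma>2)"
  obtains \<alpha> where "\<alpha> \<in> realized_beyond \<sigma>1 \<sigma>2 n" "\<And>j. j \<in> J \<Longrightarrow> \<alpha> j = \<alpha>0 j"
proof -
  \<comment> \<open>\<open>m \<notin> snd ` dom \<sigma>2\<close> keeps the two slices from both prescribing an entry \<open>(w, m, m)\<close>.\<close>
  define used where "used = fst ` snd ` J \<union> snd ` snd ` J \<union> snd ` dom \<sigma>2"
  have "finite used" using assms by (simp add: used_def)
  then obtain m where m: "m \<ge> n" "m \<notin> used"
    by (metis finite_nat_set_iff_bounded_le le_Suc_eq not_less_eq_eq nat_le_linear)
  define \<alpha> where "\<alpha> k = (if k \<in> J then \<alpha>0 k else case k of (w, a, c) \<Rightarrow>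
      if a = m \<and> (w, c) \<in> dom \<sigma>1 then the (\<sigma>1 (w, c))
      else if c = m \<and> (w, a) \<in> dom \<sigma>2 then the (\<sigma>2 (w, a))
      else \<alpha>0 k)" for k
  have "\<sigma>1 \<subseteq>\<^sub>m Some \<circ> \<alpha> \<circ> (\<lambda>(w, j). (w, m, j))"
    unfolding map_le_def
  proof
    fix k assume "k \<in> dom \<sigma>1"
    moreover have "(fst k, m, snd k) \<notin> J" using m(2) by (force simp: used_def)
    ultimately show "\<sigma>1 k = (Some \<circ> \<alpha> \<circ> (\<lambda>(w, j). (w, m, j))) k"
      by (auto simp: \<alpha>_def split: prod.splits)
  qed
  moreover have "\<sigma>2 \<subseteq>\<^sub>m Some \<circ> \<alpha> \<circ> (\<lambda>(w, j). (w, j, m))"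
    unfolding map_le_def
  proof
    fix k assume k: "k \<in> dom \<sigma>2"
    moreover have "(fst k, snd k, m) \<notin> J" using m(2) by (force simp: used_def)
    moreover have "snd k \<noteq> m" using k m(2) by (auto simp: used_def)
    ultimately show "\<sigma>2 k = (Some \<circ> \<alpha> \<circ> (\<lambda>(w, j). (w, j, m))) k"
      by (auto simp: \<alpha>_def split: prod.splits)
  qed
  ultimately have "\<alpha> \<in> realized_beyond \<sigma>1 \<sigma>2 n"
    using m(1) unfolding realized_beyond_def by blast
  moreover have "\<alpha> j = \<alpha>0 j" if "j \<in> J" for j
    using that by (auto simp: \<alpha>_def)
  ultimately show thesis by (rule that)
qed

lemma nowhere_dense_compl_realized_beyond:
  fixes \<sigma>1 \<sigma>2 :: "'w \<times> nat \<rightharpoonup> 'b::discrete_topology"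
  assumes "finite (dom \<sigma>1)" "finite (dom \<sigma>2)"
  shows "nowhere_dense (- realized_beyond \<sigma>1 \<sigma>2 n)"
proof (rule nowhere_dense_compl_of_open_dense)
  show "open (realized_beyond \<sigma>1 \<sigma>2 n)"
    using assms by (rule open_realized_beyond)
next
  fix W :: "('w \<times> nat \<times> nat \<Rightarrow> 'b) set"
  assume "open W" "W \<noteq> {}"
  then obtain \<alpha>0 J where "finite J" "\<And>\<alpha>. (\<And>j. j \<in> J \<Longrightarrow> \<alpha> j = \<alpha>0 j) \<Longrightarrow> \<alpha> \<in> W"
    by (metis equals0I open_fun_contains_cylinder)
  with realized_beyond_meets_cylinder[OF _ assms] show "W \<inter> realized_beyond \<sigma>1 \<sigma>2 n \<noteq> {}"
    by (metis disjoint_iff)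
qed

definition seq_code :: "(nat \<Rightarrow> nat \<Rightarrow> bool) \<Rightarrow> nat list \<Rightarrow> nat list \<Rightarrow> bool list list" where
  "seq_code z s t = map (\<lambda>i. seqcomp (z i) t) s"

lemma gamma_eq_seq_code: "gamma \<alpha> z sd tk = \<alpha> (seq_code z (fst sd) (fst tk), snd tk, snd sd)"
  by (simp add: gamma_def seq_code_def)

lemma injective_seq_iff_separated_transpose: "injective_seq y \<longleftrightarrow> separated (\<lambda>n i. y i n)"
  by (auto simp: injective_seq_def separated_def fun_eq_iff)

lemma separated_map_neq:
  assumes "separated z" "t \<noteq> t'"
  shows "\<exists>i. map (z i) t \<noteq> map (z i) t'"
proof (cases "length t = length t'")
  case True
  then obtain j where j: "j < length t" "t ! j \<noteq> t' ! j"
    using assms(2) by (auto simp: list_eq_iff_nth_eq)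
  then obtain i where "z i (t ! j) \<noteq> z i (t' ! j)"
    using assms(1) by (auto simp: separated_def)
  then have "map (z i) t ! j \<noteq> map (z i) t' ! j"
    using j True by simp
  then show ?thesis by metis
next
  case False
  then show ?thesis by (metis length_map)
qed

lemma separated_finitely_many_witnesses:
  assumes "separated z" "finite A"
  shows "\<exists>S. finite S \<and> (\<forall>t\<in>A. \<forall>t'\<in>A. (\<forall>i\<in>S. map (z i) t = map (z i) t') \<longrightarrow> t = t')"
proof -
  define wit where "wit t t' = (SOME i. map (z i) t \<noteq> map (z i) t')" for t t'
  have wit: "map (z (wit t t')) t \<noteq> map (z (wit t t')) t'" if "t \<noteq> t'" for t t'
    unfolding wit_def using someI_ex[OF separated_map_neq[OF assms(1) that]] .
  have "wit t t' \<in> case_prod wit ` (A \<times> A)" if "t \<in> A" "t' \<in> A" for t t'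
    using that by (intro image_eqI[of _ _ "(t, t')"]) auto
  then have "\<forall>t\<in>A. \<forall>t'\<in>A. (\<forall>i\<in>case_prod wit ` (A \<times> A). map (z i) t = map (z i) t') \<longrightarrow> t = t'"
    using wit by blast
  moreover have "finite (case_prod wit ` (A \<times> A))"
    using assms(2) by simp
  ultimately show ?thesis by blast
qed

lemma inj_on_seq_code:
  assumes "separated z" "finite A"
  shows "\<exists>S. finite S \<and> (\<forall>s. S \<subseteq> set s \<longrightarrow> inj_on (seq_code z s) A)"
proof -
  obtain S where "finite S" and S: "\<forall>t\<in>A. \<forall>t'\<in>A. (\<forall>i\<in>S. map (z i) t = map (z i) t') \<longrightarrow> t = t'"
    using separated_finitely_many_witnesses[OF assms] by blast
  have "inj_on (seq_code z s) A" if "S \<subseteq> set s" for s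
    using that S by (intro inj_onI) (auto simp: seq_code_def seqcomp_def, blast)
  with \<open>finite S\<close> show ?thesis by blast
qed

lemma seq_code_transpose_eqD:
  assumes "seq_code y t s = seq_code y t' s" "n \<in> set s"
  shows "map (\<lambda>i. y i n) t = map (\<lambda>i. y i n) t'"
proof -
  obtain k where "k < length s" "s ! k = n"
    using assms(2) by (auto simp: in_set_conv_nth)
  then have "map (\<lambda>l. l ! k) (seq_code y t s) = map (\<lambda>i. y i n) t" for t
    by (simp add: seq_code_def seqcomp_def)
  then show ?thesis
    using assms(1) by metis
qed

lemma inj_on_seq_code_transpose:
  assumes "injective_seq y" "finite A"
  shows "\<exists>S. finite S \<and> (\<forall>s. S \<subseteq> set s \<longrightarrow> inj_on (\<lambda>t. seq_code y t s) A)"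
proof -
  have "separated (\<lambda>n i. y i n)"
    using assms(1) by (simp add: injective_seq_iff_separated_transpose)
  then obtain S where "finite S"
    and S: "\<forall>t\<in>A. \<forall>t'\<in>A. (\<forall>n\<in>S. map (\<lambda>i. y i n) t = map (\<lambda>i. y i n) t') \<longrightarrow> t = t'"
    using separated_finitely_many_witnesses[OF _ assms(2)] by blast
  have "inj_on (\<lambda>t. seq_code y t s) A" if "S \<subseteq> set s" for s
  proof (rule inj_onI)
    fix t t' assume "t \<in> A" "t' \<in> A" "seq_code y t s = seq_code y t' s"
    moreover from this(3) have "\<forall>n\<in>S. map (\<lambda>i. y i n) t = map (\<lambda>i. y i n) t'"
      using that seq_code_transpose_eqD by blast
    ultimately show "t = t'" using S by blast
  qed
  with \<open>finite S\<close> show ?thesis by blast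
qed

lemma inj_on_map_prod_fst:
  assumes "inj_on f (fst ` D)"
  shows "inj_on (map_prod f id) D"
  using map_prod_inj_on[OF assms inj_on_id[of "snd ` D"]]
  by (rule inj_on_subset) (force simp: image_iff)

definition push_map :: "('a \<Rightarrow> 'c) \<Rightarrow> ('a \<rightharpoonup> 'b) \<Rightarrow> 'c \<rightharpoonup> 'b" where
  "push_map \<kappa> \<tau> = (\<tau> \<circ> inv_into (dom \<tau>) \<kappa>) |` (\<kappa> ` dom \<tau>)"

lemma push_map_apply: "inj_on \<kappa> (dom \<tau>) \<Longrightarrow> q \<in> dom \<tau> \<Longrightarrow> push_map \<kappa> \<tau> (\<kappa> q) = \<tau> q"
  by (simp add: push_map_def inv_into_f_f)

lemma finite_dom_push_map:
  assumes "finite (dom \<tau>)"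
  shows "finite (dom (push_map \<kappa> \<tau>))"
proof (rule finite_subset)
  show "dom (push_map \<kappa> \<tau>) \<subseteq> \<kappa> ` dom \<tau>"
    by (simp add: push_map_def)
qed (use assms in simp)

lemma extends_if_push_map_le:
  assumes "inj_on \<kappa> (dom \<tau>)" "push_map \<kappa> \<tau> \<subseteq>\<^sub>m g" "\<And>q. g (\<kappa> q) = Some (f q)"
  shows "extends f \<tau>"
  unfolding extends_def
proof
  fix q assume q: "q \<in> dom \<tau>"
  then have "\<kappa> q \<in> dom (push_map \<kappa> \<tau>)"
    using push_map_apply[OF assms(1) q] by (simp add: domIff)
  then have "push_map \<kappa> \<tau> (\<kappa> q) = g (\<kappa> q)"
    using assms(2) by (simp add: map_le_def)
  then show "\<tau> q = Some (f q)"
    using push_map_apply[OF assms(1) q] by (simp add: assms(3))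
qed

lemma generic_gamma_rows_extend:
  fixes \<alpha> :: "bool list list \<times> nat \<times> nat \<Rightarrow> bool"
  assumes generic: "\<And>\<sigma>1 \<sigma>2 n. finite (dom \<sigma>1) \<Longrightarrow> finite (dom \<sigma>2) \<Longrightarrow> \<alpha> \<in> realized_beyond \<sigma>1 \<sigma>2 n"
    and "separated y" "finite (dom \<tau>)"
  shows "infinite {p. extends (\<lambda>q. gamma \<alpha> y p q) \<tau>}"
proof -
  obtain S where "finite S" and S: "\<forall>s. S \<subseteq> set s \<longrightarrow> inj_on (seq_code y s) (fst ` dom \<tau>)"
    using inj_on_seq_code[OF \<open>separated y\<close> finite_imageI[OF \<open>finite (dom \<tau>)\<close>]] by blast
  obtain s where "set s = S"
    using finite_list[OF \<open>finite S\<close>] by blast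
  with S have "inj_on (seq_code y s) (fst ` dom \<tau>)"
    by simp
  then have inj: "inj_on (map_prod (seq_code y s) id) (dom \<tau>)"
    by (rule inj_on_map_prod_fst)
  show ?thesis
  proof (rule infinite_if_fibre_unbounded)
    fix n
    have "\<alpha> \<in> realized_beyond Map.empty (push_map (map_prod (seq_code y s) id) \<tau>) n"
      using \<open>finite (dom \<tau>)\<close> by (intro generic finite_dom_push_map) simp_all
    then obtain m where "m \<ge> n"
      and m: "push_map (map_prod (seq_code y s) id) \<tau> \<subseteq>\<^sub>m Some \<circ> \<alpha> \<circ> (\<lambda>(w, j). (w, j, m))"
      unfolding realized_beyond_def by blast
    have "extends (\<lambda>q. gamma \<alpha> y (s, m) q) \<tau>"
      by (rule extends_if_push_map_le[OF inj m]) (simp add: gamma_eq_seq_code case_prod_unfold)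
    with \<open>m \<ge> n\<close> show "\<exists>m\<ge>n. (s, m) \<in> {p. extends (\<lambda>q. gamma \<alpha> y p q) \<tau>}"
      by blast
  qed
qed

lemma generic_gamma_cross_extend:
  fixes \<alpha> :: "bool list list \<times> nat \<times> nat \<Rightarrow> bool"
  assumes generic: "\<And>\<sigma>1 \<sigma>2 n. finite (dom \<sigma>1) \<Longrightarrow> finite (dom \<sigma>2) \<Longrightarrow> \<alpha> \<in> realized_beyond \<sigma>1 \<sigma>2 n"
    and "separated x" "injective_seq y" "finite (dom \<tau>1)" "finite (dom \<tau>2)"
  shows "infinite {q. extends (\<lambda>p. gamma \<alpha> y p q) \<tau>1 \<and> extends (\<lambda>p. gamma \<alpha> x q p) \<tau>2}"
proof -
  obtain S1 where "finite S1" and S1: "\<forall>s. S1 \<subseteq> set s \<longrightarrow> inj_on (\<lambda>t. seq_code y t s) (fst ` dom \<tau>1)"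
    using inj_on_seq_code_transpose[OF \<open>injective_seq y\<close> finite_imageI[OF \<open>finite (dom \<tau>1)\<close>]] by blast
  obtain S2 where "finite S2" and S2: "\<forall>s. S2 \<subseteq> set s \<longrightarrow> inj_on (seq_code x s) (fst ` dom \<tau>2)"
    using inj_on_seq_code[OF \<open>separated x\<close> finite_imageI[OF \<open>finite (dom \<tau>2)\<close>]] by blast
  obtain s where "set s = S1 \<union> S2"
    using finite_list[of "S1 \<union> S2"] \<open>finite S1\<close> \<open>finite S2\<close> by blast
  then have inj1: "inj_on (map_prod (\<lambda>t. seq_code y t s) id) (dom \<tau>1)"
    and inj2: "inj_on (map_prod (seq_code x s) id) (dom \<tau>2)"
    using S1 S2 by (auto intro: inj_on_map_prod_fst)
  show ?thesis
  proof (rule infinite_if_fibre_unbounded)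
    fix n
    have "\<alpha> \<in> realized_beyond (push_map (map_prod (\<lambda>t. seq_code y t s) id) \<tau>1)
        (push_map (map_prod (seq_code x s) id) \<tau>2) n"
      using \<open>finite (dom \<tau>1)\<close> \<open>finite (dom \<tau>2)\<close> by (intro generic finite_dom_push_map)
    then obtain m where "m \<ge> n"
      and m1: "push_map (map_prod (\<lambda>t. seq_code y t s) id) \<tau>1 \<subseteq>\<^sub>m Some \<circ> \<alpha> \<circ> (\<lambda>(w, j). (w, m, j))"
      and m2: "push_map (map_prod (seq_code x s) id) \<tau>2 \<subseteq>\<^sub>m Some \<circ> \<alpha> \<circ> (\<lambda>(w, j). (w, j, m))"
      unfolding realized_beyond_def by blast
    have "extends (\<lambda>p. gamma \<alpha> y p (s, m)) \<tau>1"
      by (rule extends_if_push_map_le[OF inj1 m1]) (simp add: gamma_eq_seq_code case_prod_unfold)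
    moreover have "extends (\<lambda>p. gamma \<alpha> x (s, m) p) \<tau>2"
      by (rule extends_if_push_map_le[OF inj2 m2]) (simp add: gamma_eq_seq_code case_prod_unfold)
    ultimately show "\<exists>m\<ge>n. (s, m) \<in> {q. extends (\<lambda>p. gamma \<alpha> y p q) \<tau>1 \<and> extends (\<lambda>p. gamma \<alpha> x q p) \<tau>2}"
      using \<open>m \<ge> n\<close> by blast
  qed
qed

theorem lemma4p3:
  shows "comeager {\<alpha> :: bool list list \<times> nat \<times> nat \<Rightarrow> bool.
     \<forall>x y. separated x \<and> injective_seq y \<and> separated y \<longrightarrow>
       (\<forall>\<tau>. finite_partial \<tau> \<longrightarrow>
          infinite {p. extends (\<lambda>q. gamma \<alpha> y p q) \<tau>}) \<and>
       (\<forall>\<tau>1 \<tau>2. finite_partial \<tau>1 \<and> finite_partial \<tau>2 \<longrightarrow>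
          infinite {q. extends (\<lambda>p. gamma \<alpha> y p q) \<tau>1 \<and> extends (\<lambda>p. gamma \<alpha> x q p) \<tau>2})}"
  (is "comeager ?S")
proof -
  define Fin where "Fin = {\<sigma> :: bool list list \<times> nat \<rightharpoonup> bool. finite (dom \<sigma>)}"
  define F where "F = (\<lambda>(\<sigma>1, \<sigma>2, n). - realized_beyond \<sigma>1 \<sigma>2 n) ` (Fin \<times> Fin \<times> (UNIV :: nat set))"
  have "countable F"
    unfolding F_def Fin_def
    by (intro countable_image countable_SIGMA countable_finite_dom_maps countableI_type)
  moreover have "\<forall>T\<in>F. nowhere_dense T"
    unfolding F_def Fin_def by (clarsimp intro!: nowhere_dense_compl_realized_beyond)
  moreover have in_S: "\<alpha> \<in> ?S" if "\<alpha> \<notin> \<Union>F" for \<alpha>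
  proof -
    have generic: "\<alpha> \<in> realized_beyond \<sigma>1 \<sigma>2 n" if "finite (dom \<sigma>1)" "finite (dom \<sigma>2)" for \<sigma>1 \<sigma>2 n
    proof -
      have "- realized_beyond \<sigma>1 \<sigma>2 n \<in> F"
        using that unfolding F_def Fin_def by (intro image_eqI[of _ _ "(\<sigma>1, \<sigma>2, n)"]) simp_all
      with \<open>\<alpha> \<notin> \<Union>F\<close> show ?thesis by blast
    qed
    show ?thesis
    proof (intro CollectI allI impI conjI)
      fix x y \<tau> assume "separated x \<and> injective_seq y \<and> separated y" "finite_partial \<tau>"
      then show "infinite {p. extends (\<lambda>q. gamma \<alpha> y p q) \<tau>}"
        by (intro generic_gamma_rows_extend[OF generic]) (simp_all add: finite_partial_def)
    next
      fix x y \<tau>1 \<tau>2 assume "separated x \<and> injective_seq y \<and> separated y"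
        "finite_partial \<tau>1 \<and> finite_partial \<tau>2"
      then show "infinite {q. extends (\<lambda>p. gamma \<alpha> y p q) \<tau>1 \<and> extends (\<lambda>p. gamma \<alpha> x q p) \<tau>2}"
        by (intro generic_gamma_cross_extend[OF generic]) (simp_all add: finite_partial_def)
    qed
  qed
  then have "- ?S \<subseteq> \<Union>F"
    by (meson ComplD contrapos_np subsetI)
  ultimately have "countable F \<and> (\<forall>T\<in>F. nowhere_dense T) \<and> - ?S \<subseteq> \<Union>F"
    by (rule conjI[OF _ conjI])
  then show ?thesis
    unfolding comeager_def meager_def by (rule exI)
qed

end
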